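(* Let $(M,d)$ be a metric space and $Y\subseteq M$. Let $\mathcal{N}$ be a $\sigma$-algebra of subsets of $Y$ containing all Borel subsets of $Y$, and let $\nu$ be a measure on $\mathcal{N}$ with $\nu(Y)<+\infty$. Let $\upsilon_Y\in]0,+\infty[$ and assume that $Y$ is upper $\upsilon_Y$-Ahlfors regular with respect to $Y$. Let $t_1,t_2\in]0,\upsilon_Y]$ and let $K_l\in\mathcal{K}_{\upsilon_Y-t_l,Y\times Y}$ for $l\in\{1,2\}$. If $t_1+t_2<\upsilon_Y$, then for every $(x,y)\in Y^2$ with $x\neq y$ the function $t\mapsto K_1(x,t)K_2(t,y)$ is $\nu$-integrable on $Y$, the composite kernel $K_3(x,y)\equiv\int_Y K_1(x,t)K_2(t,y)\,d\nu(t)$ is continuous on $\{(x,y)\in Y^2:x\neq y\}$, and \[ \sup_{x,y\in Y,\ x\neq y}|K_3(x,y)|\,d(x,y)^{\upsilon_Y-(t_1+t_2)}<+\infty. \]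
   Context: For $\xi\in M$, $r>0$, $B(\xi,r)=\{\eta\in M: d(\xi,\eta)<r\}$. $Y$ is upper $\upsilon$-Ahlfors regular with respect to $Y$ if there exist $r_0\in]0,+\infty]$, $c_0\in]0,+\infty[$ with $\nu(B(x,r)\cap Y)\leq c_0r^{\upsilon}$ for all $x\in Y$, $r\in]0,r_0[$. For $s\in\mathbb{R}$, $\mathcal{K}_{s,Y\times Y}$ is the set of continuous functions $K:\{(x,y)\in Y\times Y: x\neq y\}\to\mathbb{C}$ with $\sup_{x\neq y}|K(x,y)|\,d(x,y)^s<+\infty$. *)

theory Defs
  imports "HOL-Analysis.Analysis"
begin

text \<open>Upper \<upsilon>-Ahlfors regularity of Y with respect to Y, for the measure N
  (ball x r = open ball B(x,r)). The radius bound r0 ranges over ]0,+\<infinity>],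
  rendered as an extended real.\<close>
definition upper_ahlfors_regular :: "'a::metric_space measure \<Rightarrow> 'a set \<Rightarrow> real \<Rightarrow> bool" where
  "upper_ahlfors_regular N Y v \<longleftrightarrow>
     (\<exists>r0::ereal. \<exists>c0::real. r0 > 0 \<and> c0 > 0 \<and>
        (\<forall>x\<in>Y. \<forall>r::real. 0 < r \<and> ereal r < r0 \<longrightarrow>
           emeasure N (ball x r \<inter> Y) \<le> ennreal (c0 * r powr v)))"

definition offdiag :: "'a set \<Rightarrow> ('a \<times> 'a) set" where
  "offdiag Y = {(x, y). x \<in> Y \<and> y \<in> Y \<and> x \<noteq> y}"

definition kernel_class :: "real \<Rightarrow> 'a::metric_space set \<Rightarrow> ('a \<Rightarrow> 'a \<Rightarrow> complex) \<Rightarrow> bool" where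
  "kernel_class s Y K \<longleftrightarrow>
     continuous_on (offdiag Y) (\<lambda>(x, y). K x y) \<and>
     (\<exists>C::real. \<forall>(x, y)\<in>offdiag Y. norm (K x y) * dist x y powr s \<le> C)"

end

(*
  Upper Ahlfors regularity, summed over dyadic annuli, gives
    \<integral>_{B(z,\<rho>)} d(z,t)^-s \<le> A \<rho>^(\<upsilon>-s)   for s < \<upsilon>,   and
    \<integral>_{Y - B(z,r)} d(z,t)^-S \<le> B r^(\<upsilon>-S)   for S > \<upsilon>;
  radii beyond r0 cost nothing because \<nu>(Y) is finite.  With s_l = \<upsilon> - t_l we have
  |K1(x,t) K2(t,y)| \<le> C d(x,t)^-s1 d(t,y)^-s2 and s1 + s2 > \<upsilon>.  Splitting Y into the balls
  of radius d(x,y)/2 around x and y and the rest (where d(t,y) \<ge> d(x,t)/3) bounds the integral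
  of this product by a multiple of d(x,y)^(\<upsilon>-s1-s2), which gives integrability and the
  estimate for K3.  For continuity at (x0,y0), the integrals over small balls around x0 and y0
  are uniformly small for all (x,y) close to (x0,y0), while off these balls the integrands are
  uniformly bounded, so dominated convergence applies there.
*)

theory Submission
  imports Defs
begin

lemma upper_ahlfors_regular_all_radii:
  assumes ahlfors: "upper_ahlfors_regular N Y v"
    and space_N: "space N = Y" and finite_N: "emeasure N Y < \<infinity>" and v_nonneg: "0 \<le> v"
  shows "\<exists>c>0. \<forall>x\<in>Y. \<forall>r>0. emeasure N (ball x r \<inter> Y) \<le> ennreal (c * r powr v)"
proof -
  obtain r0 :: ereal and c0 :: real where r0: "r0 > 0" and c0: "c0 > 0"
    and small: "\<And>x r. x \<in> Y \<Longrightarrow> 0 < r \<Longrightarrow> ereal r < r0 \<Longrightarrow>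
                  emeasure N (ball x r \<inter> Y) \<le> ennreal (c0 * r powr v)"
    using ahlfors unfolding upper_ahlfors_regular_def by blast
  obtain R where "0 < ereal R" and R_r0: "ereal R < r0"
    using ereal_dense2[OF r0] by blast
  then have R: "0 < R" by simp
  define M where "M = measure N Y"
  have M: "0 \<le> M" by (simp add: M_def)
  define c where "c = c0 + M / R powr v"
  have "emeasure N (ball x r \<inter> Y) \<le> ennreal (c * r powr v)" if "x \<in> Y" "0 < r" for x r
  proof (cases "r < R")
    case True
    then have "ereal r < r0" using R_r0 by (simp add: order_less_le_trans[of _ "ereal R"])
    then have "emeasure N (ball x r \<inter> Y) \<le> ennreal (c0 * r powr v)" using small that by blast
    also have "\<dots> \<le> ennreal (c * r powr v)"
      using M R by (intro ennreal_leI mult_right_mono) (auto simp: c_def)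
    finally show ?thesis .
  next
    case False
    have "emeasure N (ball x r \<inter> Y) \<le> emeasure N Y"
      using sets.top[of N] space_N by (intro emeasure_mono) auto
    also have "\<dots> = ennreal M"
      using finite_N by (simp add: M_def emeasure_eq_ennreal_measure)
    also have "\<dots> \<le> ennreal (c * r powr v)"
    proof (rule ennreal_leI)
      have "R powr v \<le> r powr v" using False R v_nonneg by (intro powr_mono2) auto
      then have "M \<le> M / R powr v * r powr v" using M R by (simp add: field_simps mult_left_mono)
      also have "\<dots> \<le> c * r powr v" using c0 by (intro mult_right_mono) (auto simp: c_def)
      finally show "M \<le> c * r powr v" .
    qed
    finally show ?thesis .
  qed
  moreover have "0 < c" using c0 M R by (simp add: c_def add_pos_nonneg)
  ultimately show ?thesis by blast
qed

lemma kernel_class_bound: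
  assumes "kernel_class s Y K"
  shows "\<exists>C\<ge>0. \<forall>x\<in>Y. \<forall>y\<in>Y. x \<noteq> y \<longrightarrow> norm (K x y) \<le> C * dist x y powr (-s)"
proof -
  obtain C where C: "\<forall>(x, y)\<in>offdiag Y. norm (K x y) * dist x y powr s \<le> C"
    using assms unfolding kernel_class_def by blast
  have "norm (K x y) \<le> max C 0 * dist x y powr (-s)" if "x \<in> Y" "y \<in> Y" "x \<noteq> y" for x y
  proof -
    have "norm (K x y) * dist x y powr s \<le> max C 0" using C that by (fastforce simp: offdiag_def)
    then show ?thesis using that by (simp add: powr_minus divide_inverse pos_le_divide_eq[symmetric])
  qed
  then show ?thesis by (intro exI[of _ "max C 0"]) auto
qed

lemma borel_measurable_continuous_on_diff_countable:
  fixes f :: "'a::t1_space \<Rightarrow> 'b::topological_space"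
  assumes "countable X" and "continuous_on (S - X) f"
  shows "f \<in> borel_measurable (restrict_space borel S)"
proof (rule measurable_restrict_countable[of "X \<inter> S"])
  have "continuous_on (S \<inter> - (X \<inter> S)) f"
    using assms(2) by (rule continuous_on_subset) auto
  then show "f \<in> borel_measurable (restrict_space (restrict_space borel S) (- (X \<inter> S)))"
    using borel_measurable_continuous_on_restrict measurable_cong_sets sets_restrict_restrict_space
    by metis
qed (use assms(1) in \<open>auto simp: sets_restrict_space intro!: image_eqI[of _ _ "{_}"]\<close>)

lemma nn_integral_norm_diff_le_split:
  fixes f g :: "'a \<Rightarrow> 'b::{banach, second_countable_topology}"
  assumes [measurable]: "A \<in> sets M" "f \<in> borel_measurable M" "g \<in> borel_measurable M"
  shows "(\<integral>\<^sup>+x. norm (f x - g x) \<partial>M)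
           \<le> (\<integral>\<^sup>+x\<in>A. norm (f x) \<partial>M) + (\<integral>\<^sup>+x\<in>A. norm (g x) \<partial>M) + (\<integral>\<^sup>+x\<in>space M - A. norm (f x - g x) \<partial>M)"
proof -
  have "(\<integral>\<^sup>+x. norm (f x - g x) \<partial>M)
          \<le> (\<integral>\<^sup>+x. ennreal (norm (f x)) * indicator A x + ennreal (norm (g x)) * indicator A x
                   + ennreal (norm (f x - g x)) * indicator (space M - A) x \<partial>M)"
  proof (intro nn_integral_mono)
    fix x assume "x \<in> space M"
    then show "ennreal (norm (f x - g x))
                 \<le> ennreal (norm (f x)) * indicator A x + ennreal (norm (g x)) * indicator A x
                   + ennreal (norm (f x - g x)) * indicator (space M - A) x"
      by (cases "x \<in> A") (simp_all add: ennreal_plus[symmetric] norm_triangle_ineq4 del: ennreal_plus)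
  qed
  also have "\<dots> = (\<integral>\<^sup>+x\<in>A. norm (f x) \<partial>M) + (\<integral>\<^sup>+x\<in>A. norm (g x) \<partial>M)
                   + (\<integral>\<^sup>+x\<in>space M - A. norm (f x - g x) \<partial>M)"
    by (simp add: nn_integral_add)
  finally show ?thesis .
qed

lemma tendsto_integral_dominated_off_small_sets:
  fixes f :: "nat \<Rightarrow> 'a \<Rightarrow> 'b::{banach, second_countable_topology}"
  assumes f: "\<And>n. integrable M (f n)" and g: "integrable M g"
    and finite: "emeasure M (space M) < \<infinity>"
    and lim: "AE x in M. (\<lambda>n. f n x) \<longlonglongrightarrow> g x"
    and small: "\<And>e. 0 < e \<Longrightarrow> \<exists>A\<in>sets M. \<exists>W.
       (\<integral>\<^sup>+x\<in>A. norm (g x) \<partial>M) \<le> ennreal e \<and>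
       (\<forall>\<^sub>F n in sequentially. (\<integral>\<^sup>+x\<in>A. norm (f n x) \<partial>M) \<le> ennreal e \<and>
                               (\<forall>x\<in>space M - A. norm (f n x) \<le> W))"
  shows "(\<lambda>n. integral\<^sup>L M (f n)) \<longlonglongrightarrow> integral\<^sup>L M g"
proof (rule tendsto_L1_int[OF f g], rule tendsto_zero_ennreal)
  fix r :: real assume r: "0 < r"
  then obtain A W where A: "A \<in> sets M" and g_A: "(\<integral>\<^sup>+x\<in>A. norm (g x) \<partial>M) \<le> ennreal (r / 4)"
    and "\<forall>\<^sub>F n in sequentially. (\<integral>\<^sup>+x\<in>A. norm (f n x) \<partial>M) \<le> ennreal (r / 4) \<and>
                                (\<forall>x\<in>space M - A. norm (f n x) \<le> W)"
    using small[of "r / 4"] by auto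
  then obtain n0 where n0: "\<And>n. n0 \<le> n \<Longrightarrow> (\<integral>\<^sup>+x\<in>A. norm (f n x) \<partial>M) \<le> ennreal (r / 4) \<and>
                                                (\<forall>x\<in>space M - A. norm (f n x) \<le> W)"
    unfolding eventually_sequentially by blast
  let ?out = "\<lambda>h x. indicator (space M - A) x *\<^sub>R h x"
  have [measurable]: "A \<in> sets M" "f n \<in> borel_measurable M" "g \<in> borel_measurable M"
    "?out (f n) \<in> borel_measurable M" "?out g \<in> borel_measurable M" for n
    using A f g by (auto intro!: borel_measurable_scaleR borel_measurable_indicator)
  have "(\<lambda>i. \<integral>\<^sup>+x. norm (?out g x - ?out (f (i + n0)) x) \<partial>M) \<longlonglongrightarrow> 0"
  proof (rule nn_integral_dominated_convergence_norm[where w="\<lambda>_. max W 0"])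
    show "AE x in M. norm (?out (f (i + n0)) x) \<le> max W 0" for i
    proof (intro AE_I2)
      fix x assume "x \<in> space M"
      then show "norm (?out (f (i + n0)) x) \<le> max W 0"
        using n0[of "i + n0"] by (cases "x \<in> A") (auto simp: le_max_iff_disj)
    qed
    show "(\<integral>\<^sup>+x. ennreal (max W 0) \<partial>M) < \<infinity>"
      using finite by (simp add: ennreal_mult_less_top)
    show "AE x in M. (\<lambda>i. ?out (f (i + n0)) x) \<longlonglongrightarrow> ?out g x"
      using lim by eventually_elim (intro tendsto_scaleR tendsto_const LIMSEQ_ignore_initial_segment)
  qed measurable
  then have "\<forall>\<^sub>F i in sequentially. (\<integral>\<^sup>+x. norm (?out g x - ?out (f (i + n0)) x) \<partial>M) < ennreal (r / 4)"
    using r by (intro order_tendstoD(2)) auto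
  then have "\<forall>\<^sub>F n in sequentially. (\<integral>\<^sup>+x. norm (?out g x - ?out (f n) x) \<partial>M) < ennreal (r / 4)"
    by (rule eventually_sequentially_seg[THEN iffD1])
  then show "\<forall>\<^sub>F n in sequentially. (\<integral>\<^sup>+x. norm (f n x - g x) \<partial>M) < ennreal r"
    using eventually_ge_at_top[of n0]
  proof eventually_elim
    case (elim n)
    have "(\<integral>\<^sup>+x\<in>space M - A. norm (f n x - g x) \<partial>M) = (\<integral>\<^sup>+x. norm (?out g x - ?out (f n) x) \<partial>M)"
      by (intro nn_integral_cong) (auto simp: indicator_def norm_minus_commute)
    then have "(\<integral>\<^sup>+x. norm (f n x - g x) \<partial>M) \<le> ennreal (r / 4) + ennreal (r / 4) + ennreal (r / 4)"
      using nn_integral_norm_diff_le_split[of A M "f n" g] n0[OF elim(2)] g_A elim(1)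
      by (auto elim!: order_trans intro!: add_mono)
    also have "\<dots> < ennreal r"
      using r by (simp add: ennreal_plus[symmetric] ennreal_less_iff del: ennreal_plus)
    finally show ?case .
  qed
qed

lemma ex_power_le_less:
  fixes b x :: real
  assumes "1 < b" and "1 \<le> x"
  shows "\<exists>n. b ^ n \<le> x \<and> x < b ^ Suc n"
proof -
  define k where "k = \<lfloor>log b x\<rfloor>"
  have k: "b powr k \<le> x \<and> x < b powr (k + 1)"
    using floor_log_eq_powr_iff[of x b k] assms k_def by auto
  have "0 \<le> k" using assms by (simp add: k_def)
  then have "b powr k = b ^ nat k" "b powr (k + 1) = b ^ Suc (nat k)"
    using assms by (simp_all add: powr_realpow[symmetric] powr_add)
  then show ?thesis using k by metis
qed

lemma powr_power_commute: "0 \<le> (a::real) \<Longrightarrow> (a ^ n) powr p = (a powr p) ^ n"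
  by (induction n) (auto simp: powr_mult)

text \<open>No hypothesis \<open>t \<noteq> x\<close>, \<open>t \<noteq> y\<close> is needed: there the left-hand side is \<open>0\<close>, as \<open>0 powr a = 0\<close>.\<close>

lemma dist_powr_product_le_split:
  fixes x y t :: "'a::metric_space"
  assumes s1: "0 \<le> s1" and s2: "0 \<le> s2" and h: "0 < h" "dist x y = 2 * h"
  shows "dist x t powr (-s1) * dist y t powr (-s2)
           \<le> h powr (-s2) * (dist x t powr (-s1) * indicator (ball x h) t)
             + h powr (-s1) * (dist y t powr (-s2) * indicator (ball y h) t)
             + 3 powr s2 * (dist x t powr (-(s1 + s2)) * indicator (- ball x h) t)"
    (is "?P \<le> ?T1 + ?T2 + ?T3")
proof -
  have nonneg: "0 \<le> ?T1" "0 \<le> ?T2" "0 \<le> ?T3" by auto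
  have tri: "2 * h \<le> dist x t + dist y t"
    using h(2) dist_triangle[of x y t] by (simp add: dist_commute)
  consider "dist x t < h" | "h \<le> dist x t" "dist y t < h" | "h \<le> dist x t" "h \<le> dist y t"
    by linarith
  then show ?thesis
  proof cases
    case 1
    then have "dist y t powr (-s2) \<le> h powr (-s2)"
      using tri h s2 by (intro powr_mono2') auto
    then have "?P \<le> dist x t powr (-s1) * h powr (-s2)" by (intro mult_left_mono) auto
    then have "?P \<le> ?T1" using 1 by (simp add: ac_simps)
    then show ?thesis using nonneg by linarith
  next
    case 2
    then have "dist x t powr (-s1) \<le> h powr (-s1)"
      using h s1 by (intro powr_mono2') auto
    then have "?P \<le> ?T2" using 2 by (simp add: mult_right_mono dist_commute)
    then show ?thesis using nonneg by linarith
  next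
    case 3
    have "dist x t \<le> dist x y + dist y t"
      using dist_triangle[of x t y] by (simp add: dist_commute)
    then have "dist x t / 3 \<le> dist y t" using 3 h by simp
    then have "dist y t powr (-s2) \<le> (dist x t / 3) powr (-s2)"
      using 3 h s2 by (intro powr_mono2') auto
    also have "\<dots> = 3 powr s2 * dist x t powr (-s2)"
      by (simp add: powr_divide powr_minus divide_simps)
    finally have "?P \<le> dist x t powr (-s1) * (3 powr s2 * dist x t powr (-s2))"
      by (intro mult_left_mono) auto
    also have "\<dots> = 3 powr s2 * dist x t powr (-(s1 + s2))"
      by (simp add: powr_add[symmetric] ac_simps)
    finally have "?P \<le> ?T3" using 3 by simp
    then show ?thesis using nonneg by linarith
  qed
qed

locale upper_ahlfors_space =
  fixes N :: "'a::metric_space measure" and Y :: "'a set" and v c :: real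
  assumes space_N: "space N = Y"
    and borel_sets: "sets (restrict_space borel Y) \<subseteq> sets N"
    and finite_N: "emeasure N Y < \<infinity>"
    and v_pos: "0 < v" and c_pos: "0 < c"
    and emeasure_ball_le: "\<And>x r. x \<in> Y \<Longrightarrow> 0 < r \<Longrightarrow> emeasure N (ball x r \<inter> Y) \<le> ennreal (c * r powr v)"
begin

lemma borel_measurable_restrict_N:
  "f \<in> borel_measurable (restrict_space borel Y) \<Longrightarrow> f \<in> borel_measurable N"
  using measurable_mono[of borel borel "restrict_space borel Y" N] borel_sets space_N
  by (auto simp: space_restrict_space)

lemma borel_measurable_N: "f \<in> borel_measurable borel \<Longrightarrow> f \<in> borel_measurable N"
  by (intro borel_measurable_restrict_N measurable_restrict_space1)

lemma sets_N: "A \<in> sets borel \<Longrightarrow> A \<inter> Y \<in> sets N"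
  using borel_sets by (auto simp: sets_restrict_space)

lemma pred_mem_borel_N[measurable]: "A \<in> sets borel \<Longrightarrow> Measurable.pred N (\<lambda>t. t \<in> A)"
  using sets_N space_N by (simp add: pred_def Int_def conj_commute)

lemma borel_measurable_dist_N[measurable]: "(\<lambda>t. dist z t) \<in> borel_measurable N"
  by (intro borel_measurable_N borel_measurable_continuous_onI continuous_intros)

lemma finite_measure_N: "finite_measure N"
  using finite_N space_N by (intro finite_measureI) auto

lemma emeasure_singleton_eq_0:
  assumes "z \<in> Y"
  shows "emeasure N {z} = 0"
proof -
  have le: "measure N {z} \<le> c * r powr v" if "0 < r" for r
  proof -
    have "emeasure N {z} \<le> emeasure N (ball z r \<inter> Y)"
      using that assms sets_N[of "ball z r"] by (intro emeasure_mono) auto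
    also have "\<dots> \<le> ennreal (c * r powr v)" using emeasure_ball_le assms that by auto
    finally show ?thesis using c_pos by (simp add: measure_def enn2real_leI)
  qed
  have "((\<lambda>r. c * r powr v) \<longlongrightarrow> c * 0) (at_right 0)"
    using v_pos eventually_at_right_less[of 0]
    by (intro tendsto_intros tendsto_zero_powrI)
       (auto intro: tendsto_ident_at elim: eventually_mono)
  then have "measure N {z} \<le> c * 0"
    by (rule tendsto_lowerbound) (auto intro: le eventually_mono[OF eventually_at_right_less])
  then show ?thesis
    using sets_N[of "{z}"] assms
    by (simp add: finite_measure.emeasure_eq_measure[OF finite_measure_N] measure_le_0_iff)
qed

lemma AE_neq: "z \<in> Y \<Longrightarrow> AE t in N. t \<noteq> z"
  using emeasure_singleton_eq_0[of z] sets_N[of "{z}"] by (intro AE_I[of _ _ "{z}"]) auto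

definition ball_powr_const :: "real \<Rightarrow> real" where
  "ball_powr_const s = c * 4 powr v / (2 powr (v - s) - 1)"

definition outside_ball_powr_const :: "real \<Rightarrow> real" where
  "outside_ball_powr_const S = c * 4 powr v / (1 - 2 powr (v - S))"

lemma ball_powr_const_nonneg: "s < v \<Longrightarrow> 0 \<le> ball_powr_const s"
  using c_pos by (auto simp: ball_powr_const_def intro!: divide_nonneg_nonneg ge_one_powr_ge_zero)

lemma outside_ball_powr_const_nonneg: "v < S \<Longrightarrow> 0 \<le> outside_ball_powr_const S"
  using c_pos powr_less_one[of 2 "v - S"] by (simp add: outside_ball_powr_const_def)

lemma nn_integral_annulus_le:
  assumes z: "z \<in> Y" and a: "0 < a" and s: "0 \<le> s"
  shows "(\<integral>\<^sup>+t\<in>cball z (2 * a) - ball z a. ennreal (dist z t powr (-s)) \<partial>N)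
           \<le> ennreal (c * 4 powr v * a powr (v - s))"
proof -
  have "(\<integral>\<^sup>+t\<in>cball z (2 * a) - ball z a. ennreal (dist z t powr (-s)) \<partial>N)
          \<le> (\<integral>\<^sup>+t\<in>ball z (4 * a) \<inter> Y. ennreal (a powr (-s)) \<partial>N)"
  proof (intro nn_integral_mono)
    fix t assume "t \<in> space N"
    moreover have "dist z t powr (-s) \<le> a powr (-s)" if "a \<le> dist z t"
      using that a s by (intro powr_mono2') auto
    ultimately show "ennreal (dist z t powr (-s)) * indicator (cball z (2 * a) - ball z a) t
                       \<le> ennreal (a powr (-s)) * indicator (ball z (4 * a) \<inter> Y) t"
      using a space_N by (auto simp: indicator_def intro: ennreal_leI)
  qed
  also have "\<dots> = ennreal (a powr (-s)) * emeasure N (ball z (4 * a) \<inter> Y)"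
    by (intro nn_integral_cmult_indicator sets_N) auto
  also have "\<dots> \<le> ennreal (a powr (-s)) * ennreal (c * (4 * a) powr v)"
    using emeasure_ball_le[of z "4 * a"] z a by (intro mult_left_mono) auto
  also have "\<dots> = ennreal (c * 4 powr v * a powr (v - s))"
    using a c_pos by (simp add: ennreal_mult[symmetric] powr_mult powr_diff powr_minus field_simps)
  finally show ?thesis .
qed

lemma nn_integral_dyadic_cover_le:
  assumes z: "z \<in> Y" and s: "0 \<le> s" and a: "0 < a" and b: "0 < b" and q: "b powr (v - s) < 1"
    and cover: "A - {z} \<subseteq> (\<Union>k. cball z (2 * a * b ^ k) - ball z (a * b ^ k))"
  shows "(\<integral>\<^sup>+t\<in>A. ennreal (dist z t powr (-s)) \<partial>N)
           \<le> ennreal (c * 4 powr v * a powr (v - s) / (1 - b powr (v - s)))"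
proof -
  let ?f = "\<lambda>t. ennreal (dist z t powr (-s))"
  let ?R = "\<lambda>k::nat. cball z (2 * (a * b ^ k)) - ball z (a * b ^ k)"
  define q where "q = b powr (v - s)"
  have "(\<integral>\<^sup>+t\<in>A. ?f t \<partial>N) \<le> (\<integral>\<^sup>+t. (\<Sum>k. ?f t * indicator (?R k) t) \<partial>N)"
  proof (intro nn_integral_mono)
    fix t
    show "?f t * indicator A t \<le> (\<Sum>k. ?f t * indicator (?R k) t)"
    proof (cases "t \<in> A \<and> t \<noteq> z")
      case True
      then obtain k where "t \<in> ?R k" using cover by (auto simp: mult.assoc)
      then have "?f t * indicator A t = (\<Sum>k\<in>{k}. ?f t * indicator (?R k) t)"
        using True by simp
      also have "\<dots> \<le> (\<Sum>k. ?f t * indicator (?R k) t)"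
        by (rule sum_le_suminf) auto
      finally show ?thesis .
    qed auto
  qed
  also have "\<dots> = (\<Sum>k. \<integral>\<^sup>+t\<in>?R k. ?f t \<partial>N)"
    by (intro nn_integral_suminf) measurable
  also have "\<dots> \<le> (\<Sum>k. ennreal (c * 4 powr v * a powr (v - s) * q ^ k))"
  proof (intro suminf_le summableI)
    fix k
    have "(\<integral>\<^sup>+t\<in>?R k. ?f t \<partial>N) \<le> ennreal (c * 4 powr v * (a * b ^ k) powr (v - s))"
      using a b by (intro nn_integral_annulus_le z s) auto
    also have "(a * b ^ k) powr (v - s) = a powr (v - s) * q ^ k"
      using a b by (simp add: powr_mult powr_power_commute q_def)
    finally show "(\<integral>\<^sup>+t\<in>?R k. ?f t \<partial>N) \<le> ennreal (c * 4 powr v * a powr (v - s) * q ^ k)"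
      by (simp add: mult.assoc)
  qed
  also have "\<dots> = ennreal (c * 4 powr v * a powr (v - s) * (1 / (1 - q)))"
    using q c_pos by (intro suminf_ennreal_eq sums_mult geometric_sums) (auto simp: q_def)
  finally show ?thesis by (simp add: q_def)
qed

lemma nn_integral_ball_dist_powr_le:
  assumes z: "z \<in> Y" and s: "0 \<le> s" "s < v" and \<rho>: "0 < \<rho>"
  shows "(\<integral>\<^sup>+t\<in>ball z \<rho>. ennreal (dist z t powr (-s)) \<partial>N)
           \<le> ennreal (ball_powr_const s * \<rho> powr (v - s))"
proof -
  have "(\<integral>\<^sup>+t\<in>ball z \<rho>. ennreal (dist z t powr (-s)) \<partial>N)
          \<le> ennreal (c * 4 powr v * (\<rho> / 2) powr (v - s) / (1 - (1 / 2) powr (v - s)))"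
  proof (rule nn_integral_dyadic_cover_le[OF z s(1)])
    show "(1 / 2 :: real) powr (v - s) < 1"
      using s by (simp add: powr_divide powr_less_one)
    show "ball z \<rho> - {z} \<subseteq> (\<Union>k. cball z (2 * (\<rho> / 2) * (1 / 2) ^ k) - ball z (\<rho> / 2 * (1 / 2) ^ k))"
    proof
      fix t assume t: "t \<in> ball z \<rho> - {z}"
      then have d: "0 < dist z t" "dist z t < \<rho>" by auto
      then obtain n where "2 ^ n \<le> \<rho> / dist z t" "\<rho> / dist z t < 2 ^ Suc n"
        using ex_power_le_less[of 2 "\<rho> / dist z t"] by auto
      with d show "t \<in> (\<Union>k. cball z (2 * (\<rho> / 2) * (1 / 2) ^ k) - ball z (\<rho> / 2 * (1 / 2) ^ k))"
        by (auto simp: field_simps power_one_over intro!: exI[of _ n])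
    qed
  qed (use \<rho> in auto)
  also have "c * 4 powr v * (\<rho> / 2) powr (v - s) / (1 - (1 / 2) powr (v - s))
              = ball_powr_const s * \<rho> powr (v - s)"
    using \<rho> s by (simp add: ball_powr_const_def powr_divide field_simps)
  finally show ?thesis .
qed

lemma nn_integral_outside_ball_dist_powr_le:
  assumes z: "z \<in> Y" and S: "v < S" and r: "0 < r"
  shows "(\<integral>\<^sup>+t\<in>- ball z r. ennreal (dist z t powr (-S)) \<partial>N)
           \<le> ennreal (outside_ball_powr_const S * r powr (v - S))"
proof -
  have "(\<integral>\<^sup>+t\<in>- ball z r. ennreal (dist z t powr (-S)) \<partial>N)
          \<le> ennreal (c * 4 powr v * r powr (v - S) / (1 - 2 powr (v - S)))"
  proof (rule nn_integral_dyadic_cover_le[OF z])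
    show "- ball z r - {z} \<subseteq> (\<Union>k. cball z (2 * r * 2 ^ k) - ball z (r * 2 ^ k))"
    proof
      fix t assume t: "t \<in> - ball z r - {z}"
      then obtain n where "2 ^ n \<le> dist z t / r" "dist z t / r < 2 ^ Suc n"
        using ex_power_le_less[of 2 "dist z t / r"] r by auto
      with r show "t \<in> (\<Union>k. cball z (2 * r * 2 ^ k) - ball z (r * 2 ^ k))"
        by (auto simp: field_simps intro!: exI[of _ n])
    qed
  qed (use S v_pos r in \<open>auto intro: powr_less_one\<close>)
  then show ?thesis by (simp add: outside_ball_powr_const_def field_simps)
qed


lemma nn_integral_dist_powr_product_le_split:
  assumes s1: "0 \<le> s1" and s2: "0 \<le> s2" and h: "0 < h" "dist x y = 2 * h"
  shows "(\<integral>\<^sup>+t. ennreal (dist x t powr (-s1) * dist y t powr (-s2)) \<partial>N)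
           \<le> ennreal (h powr (-s2)) * (\<integral>\<^sup>+t\<in>ball x h. ennreal (dist x t powr (-s1)) \<partial>N)
             + ennreal (h powr (-s1)) * (\<integral>\<^sup>+t\<in>ball y h. ennreal (dist y t powr (-s2)) \<partial>N)
             + ennreal (3 powr s2) * (\<integral>\<^sup>+t\<in>- ball x h. ennreal (dist x t powr (-(s1 + s2))) \<partial>N)"
proof -
  have "(\<integral>\<^sup>+t. ennreal (dist x t powr (-s1) * dist y t powr (-s2)) \<partial>N)
          \<le> (\<integral>\<^sup>+t. ennreal (h powr (-s2)) * (ennreal (dist x t powr (-s1)) * indicator (ball x h) t)
                   + ennreal (h powr (-s1)) * (ennreal (dist y t powr (-s2)) * indicator (ball y h) t)
                   + ennreal (3 powr s2) * (ennreal (dist x t powr (-(s1 + s2))) * indicator (- ball x h) t) \<partial>N)"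
  proof (intro nn_integral_mono)
    fix t
    have "ennreal (dist x t powr (-s1) * dist y t powr (-s2))
            \<le> ennreal (h powr (-s2) * (dist x t powr (-s1) * indicator (ball x h) t)
                       + h powr (-s1) * (dist y t powr (-s2) * indicator (ball y h) t)
                       + 3 powr s2 * (dist x t powr (-(s1 + s2)) * indicator (- ball x h) t))"
      by (intro ennreal_leI dist_powr_product_le_split s1 s2 h)
    then show "ennreal (dist x t powr (-s1) * dist y t powr (-s2))
            \<le> ennreal (h powr (-s2)) * (ennreal (dist x t powr (-s1)) * indicator (ball x h) t)
               + ennreal (h powr (-s1)) * (ennreal (dist y t powr (-s2)) * indicator (ball y h) t)
               + ennreal (3 powr s2) * (ennreal (dist x t powr (-(s1 + s2))) * indicator (- ball x h) t)"
      by (simp add: ennreal_mult ennreal_indicator)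
  qed
  also have "\<dots> = ennreal (h powr (-s2)) * (\<integral>\<^sup>+t\<in>ball x h. ennreal (dist x t powr (-s1)) \<partial>N)
                   + ennreal (h powr (-s1)) * (\<integral>\<^sup>+t\<in>ball y h. ennreal (dist y t powr (-s2)) \<partial>N)
                   + ennreal (3 powr s2) * (\<integral>\<^sup>+t\<in>- ball x h. ennreal (dist x t powr (-(s1 + s2))) \<partial>N)"
    by (simp add: nn_integral_add nn_integral_cmult)
  finally show ?thesis .
qed

lemma nn_integral_dist_powr_product_le:
  assumes s1: "0 \<le> s1" "s1 < v" and s2: "0 \<le> s2" "s2 < v" and s_sum: "v < s1 + s2"
  shows "\<exists>C\<ge>0. \<forall>x\<in>Y. \<forall>y\<in>Y. x \<noteq> y \<longrightarrow>
           (\<integral>\<^sup>+t. ennreal (dist x t powr (-s1) * dist y t powr (-s2)) \<partial>N)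
             \<le> ennreal (C * dist x y powr (v - (s1 + s2)))"
proof -
  define C where "C = (ball_powr_const s1 + ball_powr_const s2 + 3 powr s2 * outside_ball_powr_const (s1 + s2))
                        * 2 powr (s1 + s2 - v)"
  note nonneg = ball_powr_const_nonneg[OF s1(2)] ball_powr_const_nonneg[OF s2(2)]
    outside_ball_powr_const_nonneg[OF s_sum]
  have "(\<integral>\<^sup>+t. ennreal (dist x t powr (-s1) * dist y t powr (-s2)) \<partial>N)
          \<le> ennreal (C * dist x y powr (v - (s1 + s2)))"
    if x: "x \<in> Y" and y: "y \<in> Y" and xy: "x \<noteq> y" for x y
  proof -
    define h where "h = dist x y / 2"
    have h: "0 < h" "dist x y = 2 * h" using xy by (simp_all add: h_def)
    have "(\<integral>\<^sup>+t. ennreal (dist x t powr (-s1) * dist y t powr (-s2)) \<partial>N)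
            \<le> ennreal (h powr (-s2)) * ennreal (ball_powr_const s1 * h powr (v - s1))
              + ennreal (h powr (-s1)) * ennreal (ball_powr_const s2 * h powr (v - s2))
              + ennreal (3 powr s2) * ennreal (outside_ball_powr_const (s1 + s2) * h powr (v - (s1 + s2)))"
      by (rule order_trans[OF nn_integral_dist_powr_product_le_split[OF s1(1) s2(1) h]])
         (intro add_mono mult_left_mono nn_integral_ball_dist_powr_le nn_integral_outside_ball_dist_powr_le
                x y s1 s2 s_sum h order_refl zero_le)
    also have "\<dots> = ennreal (C * dist x y powr (v - (s1 + s2)))"
    proof -
      have "h powr (-s2) * h powr (v - s1) = h powr (v - (s1 + s2))"
        "h powr (-s1) * h powr (v - s2) = h powr (v - (s1 + s2))"
        by (simp_all add: powr_add[symmetric] algebra_simps)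
      then have "h powr (-s2) * (ball_powr_const s1 * h powr (v - s1))
                   + h powr (-s1) * (ball_powr_const s2 * h powr (v - s2))
                   + 3 powr s2 * (outside_ball_powr_const (s1 + s2) * h powr (v - (s1 + s2)))
                 = C * 2 powr (v - (s1 + s2)) * h powr (v - (s1 + s2))"
        using powr_add[of 2 "s1 + s2 - v" "v - (s1 + s2)"] by (simp add: C_def algebra_simps)
      also have "\<dots> = C * dist x y powr (v - (s1 + s2))"
        by (simp add: h(2) powr_mult mult.assoc)
      finally show ?thesis
        using nonneg by (simp add: ennreal_plus[symmetric] ennreal_mult[symmetric] del: ennreal_plus)
    qed
    finally show ?thesis .
  qed
  moreover have "0 \<le> C" using nonneg by (simp add: C_def)
  ultimately show ?thesis by blast
qed

lemma nn_integral_dist_powr_product_near_le: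
  assumes x: "x \<in> Y" and s1: "0 \<le> s1" "s1 < v" and s2: "0 \<le> s2" and \<eta>: "0 < \<eta>" and \<delta>: "0 < \<delta>"
    and xp: "dist x p < \<eta>" and far: "\<And>t. t \<in> ball p \<eta> \<Longrightarrow> \<delta> \<le> dist y t"
  shows "(\<integral>\<^sup>+t\<in>ball p \<eta>. ennreal (dist x t powr (-s1) * dist y t powr (-s2)) \<partial>N)
           \<le> ennreal (\<delta> powr (-s2) * (ball_powr_const s1 * (2 * \<eta>) powr (v - s1)))"
proof -
  have "(\<integral>\<^sup>+t\<in>ball p \<eta>. ennreal (dist x t powr (-s1) * dist y t powr (-s2)) \<partial>N)
          \<le> (\<integral>\<^sup>+t. ennreal (\<delta> powr (-s2)) * (ennreal (dist x t powr (-s1)) * indicator (ball x (2 * \<eta>)) t) \<partial>N)"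
  proof (intro nn_integral_mono)
    fix t
    show "ennreal (dist x t powr (-s1) * dist y t powr (-s2)) * indicator (ball p \<eta>) t
            \<le> ennreal (\<delta> powr (-s2)) * (ennreal (dist x t powr (-s1)) * indicator (ball x (2 * \<eta>)) t)"
    proof (cases "t \<in> ball p \<eta>")
      case True
      then have "t \<in> ball x (2 * \<eta>)" using xp dist_triangle[of x t p] by auto
      moreover have "dist y t powr (-s2) \<le> \<delta> powr (-s2)"
        using far[OF True] \<delta> s2 by (intro powr_mono2') auto
      then have "dist x t powr (-s1) * dist y t powr (-s2) \<le> dist x t powr (-s1) * \<delta> powr (-s2)"
        by (intro mult_left_mono) auto
      ultimately show ?thesis
        using True by (simp add: ennreal_mult[symmetric] ennreal_leI ac_simps)
    qed simp
  qed
  also have "\<dots> = ennreal (\<delta> powr (-s2)) * (\<integral>\<^sup>+t\<in>ball x (2 * \<eta>). ennreal (dist x t powr (-s1)) \<partial>N)"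
    by (simp add: nn_integral_cmult)
  also have "\<dots> \<le> ennreal (\<delta> powr (-s2)) * ennreal (ball_powr_const s1 * (2 * \<eta>) powr (v - s1))"
    using \<eta> by (intro mult_left_mono nn_integral_ball_dist_powr_le x s1) auto
  finally show ?thesis by (simp only: ennreal_mult'[OF powr_ge_zero])
qed

lemma nn_integral_dist_powr_product_near_pair_le:
  assumes s1: "0 \<le> s1" "s1 < v" and s2: "0 \<le> s2" "s2 < v" and x: "x \<in> Y" and y: "y \<in> Y"
    and \<eta>: "0 < \<eta>" "2 * \<eta> < \<delta>" and x0y0: "dist x0 y0 = 2 * \<delta>"
    and xx0: "dist x x0 < \<eta>" and yy0: "dist y y0 < \<eta>"
  shows "(\<integral>\<^sup>+t\<in>ball x0 \<eta> \<union> ball y0 \<eta>. ennreal (dist x t powr (-s1) * dist y t powr (-s2)) \<partial>N)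
           \<le> ennreal (\<delta> powr (-s2) * (ball_powr_const s1 * (2 * \<eta>) powr (v - s1))
                      + \<delta> powr (-s1) * (ball_powr_const s2 * (2 * \<eta>) powr (v - s2)))"
proof -
  let ?P = "\<lambda>t. ennreal (dist x t powr (-s1) * dist y t powr (-s2))"
  have \<delta>: "0 < \<delta>" using \<eta> by simp
  have "(\<integral>\<^sup>+t\<in>ball x0 \<eta> \<union> ball y0 \<eta>. ?P t \<partial>N)
          \<le> (\<integral>\<^sup>+t. ?P t * indicator (ball x0 \<eta>) t + ?P t * indicator (ball y0 \<eta>) t \<partial>N)"
    by (intro nn_integral_mono) (auto simp: indicator_def)
  also have "\<dots> = (\<integral>\<^sup>+t\<in>ball x0 \<eta>. ?P t \<partial>N) + (\<integral>\<^sup>+t\<in>ball y0 \<eta>. ennreal (dist y t powr (-s2) * dist x t powr (-s1)) \<partial>N)"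
    by (simp add: nn_integral_add ac_simps)
  also have "\<dots> \<le> ennreal (\<delta> powr (-s2) * (ball_powr_const s1 * (2 * \<eta>) powr (v - s1)))
                   + ennreal (\<delta> powr (-s1) * (ball_powr_const s2 * (2 * \<eta>) powr (v - s2)))"
  proof (intro add_mono)
    show "(\<integral>\<^sup>+t\<in>ball x0 \<eta>. ?P t \<partial>N) \<le> ennreal (\<delta> powr (-s2) * (ball_powr_const s1 * (2 * \<eta>) powr (v - s1)))"
    proof (rule nn_integral_dist_powr_product_near_le[OF x s1 s2(1) \<eta>(1) \<delta> xx0])
      fix t assume "t \<in> ball x0 \<eta>"
      then show "\<delta> \<le> dist y t"
        using dist_triangle[of x0 y0 t] dist_triangle[of t y0 y] x0y0 yy0 \<eta> by (simp add: dist_commute)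
    qed
    show "(\<integral>\<^sup>+t\<in>ball y0 \<eta>. ennreal (dist y t powr (-s2) * dist x t powr (-s1)) \<partial>N)
            \<le> ennreal (\<delta> powr (-s1) * (ball_powr_const s2 * (2 * \<eta>) powr (v - s2)))"
    proof (rule nn_integral_dist_powr_product_near_le[OF y s2 s1(1) \<eta>(1) \<delta> yy0])
      fix t assume "t \<in> ball y0 \<eta>"
      then show "\<delta> \<le> dist x t"
        using dist_triangle[of x0 y0 x] dist_triangle[of x y0 t] x0y0 xx0 \<eta> by (simp add: dist_commute)
    qed
  qed
  also have "\<dots> = ennreal (\<delta> powr (-s2) * (ball_powr_const s1 * (2 * \<eta>) powr (v - s1))
                            + \<delta> powr (-s1) * (ball_powr_const s2 * (2 * \<eta>) powr (v - s2)))"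
    using ball_powr_const_nonneg[OF s1(2)] ball_powr_const_nonneg[OF s2(2)] by (simp add: ennreal_plus)
  finally show ?thesis .
qed

end

locale composable_kernels = upper_ahlfors_space N Y v c
  for N :: "'a::metric_space measure" and Y v c +
  fixes K1 K2 :: "'a \<Rightarrow> 'a \<Rightarrow> complex" and s1 s2 C1 C2 :: real
  assumes s1: "0 \<le> s1" "s1 < v" and s2: "0 \<le> s2" "s2 < v" and s_sum: "v < s1 + s2"
    and C1: "0 \<le> C1" and C2: "0 \<le> C2"
    and K1_le: "\<And>x t. x \<in> Y \<Longrightarrow> t \<in> Y \<Longrightarrow> x \<noteq> t \<Longrightarrow> norm (K1 x t) \<le> C1 * dist x t powr (-s1)"
    and K2_le: "\<And>t y. t \<in> Y \<Longrightarrow> y \<in> Y \<Longrightarrow> t \<noteq> y \<Longrightarrow> norm (K2 t y) \<le> C2 * dist t y powr (-s2)"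
    and K1_cont: "continuous_on (offdiag Y) (\<lambda>(x, y). K1 x y)"
    and K2_cont: "continuous_on (offdiag Y) (\<lambda>(x, y). K2 x y)"
begin

lemma continuous_on_kernel_product:
  assumes "x \<in> Y" "y \<in> Y"
  shows "continuous_on (Y - {x, y}) (\<lambda>t. K1 x t * K2 t y)"
proof (intro continuous_intros)
  show "continuous_on (Y - {x, y}) (\<lambda>t. K1 x t)"
    by (rule continuous_on_compose2[OF K1_cont, of _ "\<lambda>t. (x, t)", simplified])
       (use assms in \<open>auto simp: offdiag_def intro!: continuous_intros\<close>)
  show "continuous_on (Y - {x, y}) (\<lambda>t. K2 t y)"
    by (rule continuous_on_compose2[OF K2_cont, of _ "\<lambda>t. (t, y)", simplified])
       (use assms in \<open>auto simp: offdiag_def intro!: continuous_intros\<close>)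
qed

lemma borel_measurable_kernel_product[measurable]:
  "x \<in> Y \<Longrightarrow> y \<in> Y \<Longrightarrow> (\<lambda>t. K1 x t * K2 t y) \<in> borel_measurable N"
  by (intro borel_measurable_restrict_N borel_measurable_continuous_on_diff_countable[of "{x, y}"]
            continuous_on_kernel_product) auto

lemma norm_kernel_product_le:
  assumes "x \<in> Y" "y \<in> Y" "t \<in> Y" "t \<noteq> x" "t \<noteq> y"
  shows "norm (K1 x t * K2 t y) \<le> C1 * C2 * (dist x t powr (-s1) * dist y t powr (-s2))"
proof -
  have "norm (K1 x t * K2 t y) \<le> (C1 * dist x t powr (-s1)) * (C2 * dist t y powr (-s2))"
    unfolding norm_mult using assms C1 by (intro mult_mono K1_le K2_le) auto
  then show ?thesis by (simp add: dist_commute ac_simps)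
qed

lemma nn_integral_norm_kernel_product_le:
  assumes "x \<in> Y" "y \<in> Y" "A \<in> sets borel"
  shows "(\<integral>\<^sup>+t\<in>A. norm (K1 x t * K2 t y) \<partial>N)
           \<le> ennreal (C1 * C2) * (\<integral>\<^sup>+t\<in>A. ennreal (dist x t powr (-s1) * dist y t powr (-s2)) \<partial>N)"
proof -
  have "AE t in N. ennreal (norm (K1 x t * K2 t y)) * indicator A t
          \<le> ennreal (C1 * C2) * (ennreal (dist x t powr (-s1) * dist y t powr (-s2)) * indicator A t)"
    using AE_neq[OF assms(1)] AE_neq[OF assms(2)] AE_space
  proof eventually_elim
    case (elim t)
    then have "ennreal (norm (K1 x t * K2 t y)) \<le> ennreal (C1 * C2 * (dist x t powr (-s1) * dist y t powr (-s2)))"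
      using assms space_N by (intro ennreal_leI norm_kernel_product_le) auto
    then show ?case
      using C1 C2 by (auto simp: ennreal_mult indicator_def)
  qed
  then have "(\<integral>\<^sup>+t\<in>A. norm (K1 x t * K2 t y) \<partial>N)
          \<le> (\<integral>\<^sup>+t. ennreal (C1 * C2) * (ennreal (dist x t powr (-s1) * dist y t powr (-s2)) * indicator A t) \<partial>N)"
    by (rule nn_integral_mono_AE)
  also have "\<dots> = ennreal (C1 * C2) * (\<integral>\<^sup>+t\<in>A. ennreal (dist x t powr (-s1) * dist y t powr (-s2)) \<partial>N)"
    using assms(3)[measurable] by (intro nn_integral_cmult) measurable
  finally show ?thesis .
qed

lemma nn_integral_norm_kernel_product_bound:
  "\<exists>C\<ge>0. \<forall>x\<in>Y. \<forall>y\<in>Y. x \<noteq> y \<longrightarrow>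
     (\<integral>\<^sup>+t. norm (K1 x t * K2 t y) \<partial>N) \<le> ennreal (C * dist x y powr (v - (s1 + s2)))"
proof -
  obtain C where C: "0 \<le> C" and int_le: "\<forall>x\<in>Y. \<forall>y\<in>Y. x \<noteq> y \<longrightarrow>
      (\<integral>\<^sup>+t. ennreal (dist x t powr (-s1) * dist y t powr (-s2)) \<partial>N) \<le> ennreal (C * dist x y powr (v - (s1 + s2)))"
    using nn_integral_dist_powr_product_le[OF s1 s2 s_sum] by blast
  have "(\<integral>\<^sup>+t. norm (K1 x t * K2 t y) \<partial>N) \<le> ennreal (C1 * C2 * C * dist x y powr (v - (s1 + s2)))"
    if x: "x \<in> Y" and y: "y \<in> Y" and xy: "x \<noteq> y" for x y
  proof -
    have "(\<integral>\<^sup>+t. norm (K1 x t * K2 t y) \<partial>N) \<le> ennreal (C1 * C2) * ennreal (C * dist x y powr (v - (s1 + s2)))"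
      using nn_integral_norm_kernel_product_le[OF x y, of UNIV] int_le x y xy
      by (auto elim!: order_trans intro!: mult_left_mono)
    also have "\<dots> = ennreal (C1 * C2 * C * dist x y powr (v - (s1 + s2)))"
      using C1 C2 by (simp add: ennreal_mult'[symmetric] mult.assoc)
    finally show ?thesis .
  qed
  then show ?thesis using C C1 C2 by (intro exI[of _ "C1 * C2 * C"]) auto
qed

lemma integrable_kernel_product:
  assumes x: "x \<in> Y" and y: "y \<in> Y" and xy: "x \<noteq> y"
  shows "integrable N (\<lambda>t. K1 x t * K2 t y)"
proof (rule integrableI_bounded)
  show "(\<integral>\<^sup>+t. norm (K1 x t * K2 t y) \<partial>N) < \<infinity>"
    using nn_integral_norm_kernel_product_bound x y xy by (auto intro: le_less_trans[OF _ ennreal_less_top])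
qed (use x y in measurable)

lemma norm_kernel_composition_le:
  "\<exists>C. \<forall>x\<in>Y. \<forall>y\<in>Y. x \<noteq> y \<longrightarrow>
     norm (LINT t|N. K1 x t * K2 t y) * dist x y powr (s1 + s2 - v) \<le> C"
proof -
  obtain C where C: "0 \<le> C" and int_le: "\<forall>x\<in>Y. \<forall>y\<in>Y. x \<noteq> y \<longrightarrow>
      (\<integral>\<^sup>+t. norm (K1 x t * K2 t y) \<partial>N) \<le> ennreal (C * dist x y powr (v - (s1 + s2)))"
    using nn_integral_norm_kernel_product_bound by blast
  have "norm (LINT t|N. K1 x t * K2 t y) * dist x y powr (s1 + s2 - v) \<le> C"
    if x: "x \<in> Y" and y: "y \<in> Y" and xy: "x \<noteq> y" for x y
  proof -
    have "ennreal (norm (LINT t|N. K1 x t * K2 t y)) \<le> (\<integral>\<^sup>+t. norm (K1 x t * K2 t y) \<partial>N)"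
      by (intro integral_norm_bound_ennreal integrable_kernel_product x y xy)
    also have "\<dots> \<le> ennreal (C * dist x y powr (v - (s1 + s2)))"
      using int_le x y xy by blast
    finally have "norm (LINT t|N. K1 x t * K2 t y) \<le> C * dist x y powr (v - (s1 + s2))"
      using C by (simp add: ennreal_le_iff)
    then have "norm (LINT t|N. K1 x t * K2 t y) * dist x y powr (s1 + s2 - v)
                 \<le> C * dist x y powr (v - (s1 + s2)) * dist x y powr (s1 + s2 - v)"
      by (rule mult_right_mono) simp
    also have "\<dots> = C"
      using xy by (simp add: mult.assoc powr_add[symmetric])
    finally show ?thesis .
  qed
  then show ?thesis by blast
qed

lemma nn_integral_kernel_product_near_small:
  assumes x0: "x0 \<in> Y" and y0: "y0 \<in> Y" and x0y0: "x0 \<noteq> y0" and e: "0 < e"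
  shows "\<exists>\<eta>>0. \<forall>x\<in>Y. \<forall>y\<in>Y. dist x x0 < \<eta> \<longrightarrow> dist y y0 < \<eta> \<longrightarrow>
           (\<integral>\<^sup>+t\<in>ball x0 \<eta> \<union> ball y0 \<eta>. norm (K1 x t * K2 t y) \<partial>N) \<le> ennreal e"
proof -
  define \<delta> where "\<delta> = dist x0 y0 / 2"
  have \<delta>: "0 < \<delta>" "dist x0 y0 = 2 * \<delta>" using x0y0 by (simp_all add: \<delta>_def)
  define E where "E \<eta> = \<delta> powr (-s2) * (ball_powr_const s1 * (2 * \<eta>) powr (v - s1))
                        + \<delta> powr (-s1) * (ball_powr_const s2 * (2 * \<eta>) powr (v - s2))" for \<eta>
  have powr_lim: "((\<lambda>\<eta>. (2 * \<eta>) powr (v - s)) \<longlongrightarrow> 0) (at_right 0)" if "s < v" for s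
  proof (rule tendsto_zero_powrI)
    have "((\<lambda>\<eta>::real. 2 * \<eta>) \<longlongrightarrow> 2 * 0) (at_right 0)"
      by (intro tendsto_mult tendsto_const tendsto_ident_at)
    then show "((\<lambda>\<eta>::real. 2 * \<eta>) \<longlongrightarrow> 0) (at_right 0)" by simp
    show "\<forall>\<^sub>F \<eta> in at_right 0. 0 \<le> 2 * (\<eta>::real)"
      by (rule eventually_mono[OF eventually_at_right_less]) simp
  qed (use that in auto)
  have "((\<lambda>\<eta>. C1 * C2 * E \<eta>) \<longlongrightarrow> C1 * C2 * (\<delta> powr (-s2) * (ball_powr_const s1 * 0)
                                           + \<delta> powr (-s1) * (ball_powr_const s2 * 0))) (at_right 0)"
    unfolding E_def using s1 s2 by (intro tendsto_intros powr_lim)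
  then have "\<forall>\<^sub>F \<eta> in at_right 0. C1 * C2 * E \<eta> < e"
    using e by (intro order_tendstoD(2)) auto
  moreover have "\<forall>\<^sub>F \<eta> in at_right 0. \<eta> \<in> {0<..<\<delta> / 2}"
    using \<delta> by (intro eventually_at_right_real) simp
  ultimately obtain \<eta> where E_\<eta>: "C1 * C2 * E \<eta> < e" and \<eta>: "0 < \<eta>" "\<eta> < \<delta> / 2"
    using eventually_happens[OF eventually_conj, of _ "at_right (0::real)"] by auto
  have "(\<integral>\<^sup>+t\<in>ball x0 \<eta> \<union> ball y0 \<eta>. norm (K1 x t * K2 t y) \<partial>N) \<le> ennreal e"
    if x: "x \<in> Y" and y: "y \<in> Y" and "dist x x0 < \<eta>" "dist y y0 < \<eta>" for x y
  proof -
    have "(\<integral>\<^sup>+t\<in>ball x0 \<eta> \<union> ball y0 \<eta>. norm (K1 x t * K2 t y) \<partial>N)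
            \<le> ennreal (C1 * C2) * (\<integral>\<^sup>+t\<in>ball x0 \<eta> \<union> ball y0 \<eta>. ennreal (dist x t powr (-s1) * dist y t powr (-s2)) \<partial>N)"
      by (intro nn_integral_norm_kernel_product_le x y) auto
    also have "\<dots> \<le> ennreal (C1 * C2) * ennreal (E \<eta>)"
      unfolding E_def using that \<eta> \<delta>
      by (intro mult_left_mono nn_integral_dist_powr_product_near_pair_le s1 s2) auto
    also have "\<dots> \<le> ennreal e"
      using E_\<eta> C1 C2 by (simp add: ennreal_mult'[symmetric] ennreal_leI)
    finally show ?thesis .
  qed
  then show ?thesis using \<eta> by blast
qed

lemma norm_kernel_product_le_far:
  assumes "x \<in> Y" "y \<in> Y" "t \<in> Y" "0 < r" "r \<le> dist x t" "r \<le> dist y t"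
  shows "norm (K1 x t * K2 t y) \<le> C1 * C2 * (r powr (-s1) * r powr (-s2))"
proof -
  have "norm (K1 x t * K2 t y) \<le> C1 * C2 * (dist x t powr (-s1) * dist y t powr (-s2))"
    using assms by (intro norm_kernel_product_le) auto
  also have "\<dots> \<le> C1 * C2 * (r powr (-s1) * r powr (-s2))"
    using assms s1 s2 C1 C2 by (intro mult_left_mono mult_mono powr_mono2') auto
  finally show ?thesis .
qed

lemma kernel_product_tendsto:
  assumes xs: "\<And>n. xs n \<in> Y" "xs \<longlonglongrightarrow> x0" and ys: "\<And>n. ys n \<in> Y" "ys \<longlonglongrightarrow> y0"
    and x0: "x0 \<in> Y" and y0: "y0 \<in> Y" and t: "t \<in> Y" "t \<noteq> x0" "t \<noteq> y0"
  shows "(\<lambda>n. K1 (xs n) t * K2 t (ys n)) \<longlonglongrightarrow> K1 x0 t * K2 t y0"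
proof (rule tendsto_mult)
  have "((\<lambda>n. (\<lambda>(x, y). K1 x y) (xs n, t)) \<longlongrightarrow> (\<lambda>(x, y). K1 x y) (x0, t)) sequentially"
    using tendsto_imp_eventually_ne[OF xs(2), of t] xs(1) x0 t
    by (intro continuous_on_tendsto_compose[OF K1_cont] tendsto_Pair xs(2) tendsto_const)
       (auto simp: offdiag_def elim: eventually_mono)
  then show "(\<lambda>n. K1 (xs n) t) \<longlonglongrightarrow> K1 x0 t" by simp
  have "((\<lambda>n. (\<lambda>(x, y). K2 x y) (t, ys n)) \<longlongrightarrow> (\<lambda>(x, y). K2 x y) (t, y0)) sequentially"
    using tendsto_imp_eventually_ne[OF ys(2), of t] ys(1) y0 t
    by (intro continuous_on_tendsto_compose[OF K2_cont] tendsto_Pair ys(2) tendsto_const)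
       (auto simp: offdiag_def elim: eventually_mono)
  then show "(\<lambda>n. K2 t (ys n)) \<longlonglongrightarrow> K2 t y0" by simp
qed

lemma kernel_product_small_near_bounded_far:
  assumes x0: "x0 \<in> Y" and y0: "y0 \<in> Y" and x0y0: "x0 \<noteq> y0" and e: "0 < e"
  shows "\<exists>B\<in>sets N. \<exists>W. \<exists>\<eta>>0. \<forall>x\<in>Y. \<forall>y\<in>Y. dist x x0 < \<eta> \<longrightarrow> dist y y0 < \<eta> \<longrightarrow>
           (\<integral>\<^sup>+t\<in>B. norm (K1 x t * K2 t y) \<partial>N) \<le> ennreal e \<and>
           (\<forall>t\<in>space N - B. norm (K1 x t * K2 t y) \<le> W)"
proof -
  obtain \<eta> where \<eta>: "0 < \<eta>" and near: "\<And>x y. x \<in> Y \<Longrightarrow> y \<in> Y \<Longrightarrow> dist x x0 < \<eta> \<Longrightarrow> dist y y0 < \<eta> \<Longrightarrow>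
      (\<integral>\<^sup>+t\<in>ball x0 \<eta> \<union> ball y0 \<eta>. norm (K1 x t * K2 t y) \<partial>N) \<le> ennreal e"
    using nn_integral_kernel_product_near_small[OF x0 y0 x0y0 e] by meson
  define B where "B = (ball x0 \<eta> \<union> ball y0 \<eta>) \<inter> Y"
  define W where "W = C1 * C2 * ((\<eta> / 2) powr (-s1) * (\<eta> / 2) powr (-s2))"
  have "(\<integral>\<^sup>+t\<in>B. norm (K1 x t * K2 t y) \<partial>N) \<le> ennreal e \<and>
        (\<forall>t\<in>space N - B. norm (K1 x t * K2 t y) \<le> W)"
    if "x \<in> Y" "y \<in> Y" "dist x x0 < \<eta> / 2" "dist y y0 < \<eta> / 2" for x y
  proof
    have "(\<integral>\<^sup>+t\<in>B. norm (K1 x t * K2 t y) \<partial>N)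
            \<le> (\<integral>\<^sup>+t\<in>ball x0 \<eta> \<union> ball y0 \<eta>. norm (K1 x t * K2 t y) \<partial>N)"
      by (intro nn_integral_mono) (auto simp: B_def indicator_def)
    also have "\<dots> \<le> ennreal e"
      using that zero_le_dist[of x x0] zero_le_dist[of y y0] by (intro near) linarith+
    finally show "(\<integral>\<^sup>+t\<in>B. norm (K1 x t * K2 t y) \<partial>N) \<le> ennreal e" .
    show "\<forall>t\<in>space N - B. norm (K1 x t * K2 t y) \<le> W"
    proof
      fix t assume t: "t \<in> space N - B"
      show "norm (K1 x t * K2 t y) \<le> W"
        unfolding W_def
      proof (rule norm_kernel_product_le_far)
        show "\<eta> / 2 \<le> dist x t" "\<eta> / 2 \<le> dist y t"
          using that t dist_triangle[of x0 t x] dist_triangle[of y0 t y] space_N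
          by (auto simp: B_def dist_commute)
      qed (use that t \<eta> space_N in auto)
    qed
  qed
  moreover have "B \<in> sets N" unfolding B_def by (intro sets_N) auto
  ultimately show ?thesis using \<eta> by (intro bexI[of _ B] exI[of _ W] exI[of _ "\<eta> / 2"]) auto
qed

lemma continuous_on_kernel_composition:
  "continuous_on (offdiag Y) (\<lambda>(x, y). LINT t|N. K1 x t * K2 t y)"
  unfolding continuous_on_sequentially
proof (intro allI ballI impI)
  fix p :: "nat \<Rightarrow> 'a \<times> 'a" and a assume a: "a \<in> offdiag Y" and p: "(\<forall>n. p n \<in> offdiag Y) \<and> p \<longlonglongrightarrow> a"
  obtain x0 y0 where a_eq: "a = (x0, y0)" by (cases a)
  define xs where "xs n = fst (p n)" for n
  define ys where "ys n = snd (p n)" for n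
  have x0: "x0 \<in> Y" and y0: "y0 \<in> Y" and x0y0: "x0 \<noteq> y0" using a a_eq by (auto simp: offdiag_def)
  have "p n \<in> offdiag Y" for n using p by blast
  then have xs: "xs n \<in> Y" and ys: "ys n \<in> Y" and xsys: "xs n \<noteq> ys n" for n
    by (simp_all add: xs_def ys_def offdiag_def case_prod_beta)
  have xs_lim: "xs \<longlonglongrightarrow> x0" and ys_lim: "ys \<longlonglongrightarrow> y0"
    using tendsto_fst[of p a] tendsto_snd[of p a] p a_eq by (simp_all add: xs_def[abs_def] ys_def[abs_def])
  have "(\<lambda>n. LINT t|N. K1 (xs n) t * K2 t (ys n)) \<longlonglongrightarrow> LINT t|N. K1 x0 t * K2 t y0"
  proof (rule tendsto_integral_dominated_off_small_sets)
    show "integrable N (\<lambda>t. K1 (xs n) t * K2 t (ys n))" for n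
      by (intro integrable_kernel_product xs ys xsys)
    show "integrable N (\<lambda>t. K1 x0 t * K2 t y0)"
      by (intro integrable_kernel_product x0 y0 x0y0)
    show "emeasure N (space N) < \<infinity>" using finite_N space_N by simp
    show "AE t in N. (\<lambda>n. K1 (xs n) t * K2 t (ys n)) \<longlonglongrightarrow> K1 x0 t * K2 t y0"
      using AE_neq[OF x0] AE_neq[OF y0] AE_space
      by eventually_elim (use xs ys xs_lim ys_lim x0 y0 space_N in \<open>auto intro: kernel_product_tendsto\<close>)
    fix e :: real assume "0 < e"
    from kernel_product_small_near_bounded_far[OF x0 y0 x0y0 this]
    obtain B W \<eta> where B: "B \<in> sets N" and \<eta>: "0 < \<eta>"
      and split: "\<forall>x\<in>Y. \<forall>y\<in>Y. dist x x0 < \<eta> \<longrightarrow> dist y y0 < \<eta> \<longrightarrow>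
          (\<integral>\<^sup>+t\<in>B. norm (K1 x t * K2 t y) \<partial>N) \<le> ennreal e \<and>
          (\<forall>t\<in>space N - B. norm (K1 x t * K2 t y) \<le> W)"
      by (elim bexE exE conjE)
    have "\<forall>\<^sub>F n in sequentially. dist (xs n) x0 < \<eta> \<and> dist (ys n) y0 < \<eta>"
      using \<eta> by (intro eventually_conj tendstoD xs_lim ys_lim)
    then have "\<forall>\<^sub>F n in sequentially. (\<integral>\<^sup>+t\<in>B. norm (K1 (xs n) t * K2 t (ys n)) \<partial>N) \<le> ennreal e \<and>
        (\<forall>t\<in>space N - B. norm (K1 (xs n) t * K2 t (ys n)) \<le> W)"
      by eventually_elim (use xs ys split in blast)
    moreover have "(\<integral>\<^sup>+t\<in>B. norm (K1 x0 t * K2 t y0) \<partial>N) \<le> ennreal e"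
      using split x0 y0 \<eta> by simp
    ultimately show "\<exists>A\<in>sets N. \<exists>W. (\<integral>\<^sup>+t\<in>A. norm (K1 x0 t * K2 t y0) \<partial>N) \<le> ennreal e \<and>
        (\<forall>\<^sub>F n in sequentially. (\<integral>\<^sup>+t\<in>A. norm (K1 (xs n) t * K2 t (ys n)) \<partial>N) \<le> ennreal e \<and>
                               (\<forall>t\<in>space N - A. norm (K1 (xs n) t * K2 t (ys n)) \<le> W))"
      using B by blast
  qed
  then show "((\<lambda>(x, y). LINT t|N. K1 x t * K2 t y) \<circ> p) \<longlonglongrightarrow> (\<lambda>(x, y). LINT t|N. K1 x t * K2 t y) a"
    by (simp add: o_def a_eq xs_def ys_def split_beta)
qed

lemma kernel_class_composition:
  "kernel_class (s1 + s2 - v) Y (\<lambda>x y. LINT t|N. K1 x t * K2 t y)"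
  using continuous_on_kernel_composition norm_kernel_composition_le
  unfolding kernel_class_def by (fastforce simp: offdiag_def)

end

theorem corollary4p3:
  fixes Y :: "'a::metric_space set"
    and N :: "'a measure"
    and v t1 t2 :: real
    and K1 K2 :: "'a \<Rightarrow> 'a \<Rightarrow> complex"
  assumes space_N: "space N = Y"
    and borel_sets: "sets (restrict_space borel Y) \<subseteq> sets N"
    and finite_N: "emeasure N Y < \<infinity>"
    and v_pos: "0 < v"
    and ahlfors: "upper_ahlfors_regular N Y v"
    and t1: "0 < t1" "t1 \<le> v"
    and t2: "0 < t2" "t2 \<le> v"
    and K1: "kernel_class (v - t1) Y K1"
    and K2: "kernel_class (v - t2) Y K2"
    and sum_lt: "t1 + t2 < v"
  shows "(\<forall>x\<in>Y. \<forall>y\<in>Y. x \<noteq> y \<longrightarrow> integrable N (\<lambda>t. K1 x t * K2 t y))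
       \<and> continuous_on (offdiag Y) (\<lambda>(x, y). LINT t|N. K1 x t * K2 t y)
       \<and> (\<exists>C::real. \<forall>(x, y)\<in>offdiag Y.
             norm (LINT t|N. K1 x t * K2 t y) * dist x y powr (v - (t1 + t2)) \<le> C)"
proof -
  obtain c where c: "0 < c" and ball: "\<forall>x\<in>Y. \<forall>r>0. emeasure N (ball x r \<inter> Y) \<le> ennreal (c * r powr v)"
    using upper_ahlfors_regular_all_radii[OF ahlfors space_N finite_N] v_pos by auto
  obtain C1 where C1: "0 \<le> C1" "\<forall>x\<in>Y. \<forall>y\<in>Y. x \<noteq> y \<longrightarrow> norm (K1 x y) \<le> C1 * dist x y powr (-(v - t1))"
    using kernel_class_bound[OF K1] by blast
  obtain C2 where C2: "0 \<le> C2" "\<forall>x\<in>Y. \<forall>y\<in>Y. x \<noteq> y \<longrightarrow> norm (K2 x y) \<le> C2 * dist x y powr (-(v - t2))"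
    using kernel_class_bound[OF K2] by blast
  interpret composable_kernels N Y v c K1 K2 "v - t1" "v - t2" C1 C2
    using space_N borel_sets finite_N v_pos c ball t1 t2 sum_lt C1 C2 K1 K2
    by unfold_locales (auto simp: kernel_class_def)
  have "v - t1 + (v - t2) - v = v - (t1 + t2)" by simp
  then have "kernel_class (v - (t1 + t2)) Y (\<lambda>x y. LINT t|N. K1 x t * K2 t y)"
    using kernel_class_composition by metis
  then show ?thesis
    using integrable_kernel_product unfolding kernel_class_def by blast
qed

end
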